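(* Let $\Omega=[-R,R]^d$ with $R>0$, let $k\in\mathbb{Z}_+$ with $k\ge1$, $T>0$, and $\mathbf{y}=(y_\alpha)_{\|\alpha\|_1\le k}\in\mathbb{R}^{\binom{k+d}{d}}$. If $u_0^k$ is a solution of $(P_{\Omega,k})$ with data $\mathbf{y}$, then $$\|u_0^k\|_{\mathrm{TV}}\le\|\mathbf{y}\|_\infty\sqrt{\tfrac{k}{\pi}}\exp\Big(k\big(1+2d/R+\ln\sqrt{k}\big)\Big)\max\{T^{\lfloor k/2\rfloor},1\}.$$
   Context: $\mathcal{M}(\Omega)$: signed Radon measures on $\Omega$ of finite total variation, with total variation norm $\|\cdot\|_{\mathrm{TV}}$. Multi-index notation $x^\alpha=x_1^{\alpha_1}\cdots x_d^{\alpha_d}$, $\|\alpha\|_1=\sum_i\alpha_i$. $A$ is the matrix indexed by $\{\alpha\in\mathbb{Z}_+^d:\|\alpha\|_1\le k\}$ with $A_{\alpha,\alpha'}=\alpha_i(\alpha_i-1)$ if $\alpha'=\alpha-2e_i$ for some $i$, and $0$ otherwise. Problem $(P_{\Omega,k})$: minimize $\|u_0\|_{\mathrm{TV}}$ over $u_0\in\mathcal{M}(\Omega)$ subject to $\int_\Omega x^\alpha\,du_0(x)=(e^{-TA}\mathbf{y})_\alpha$ for all $\|\alpha\|_1\le k$. *)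

theory Defs
  imports "HOL-Analysis.Analysis"
begin

text \<open>Multi-indices alpha in Z_+^d are functions 'n => nat, with d = CARD('n).\<close>

definition mi_norm1 :: "('n::finite \<Rightarrow> nat) \<Rightarrow> nat" where
  "mi_norm1 \<alpha> = (\<Sum>i\<in>UNIV. \<alpha> i)"

definition multi_indices :: "nat \<Rightarrow> ('n::finite \<Rightarrow> nat) set" where
  "multi_indices k = {\<alpha>. mi_norm1 \<alpha> \<le> k}"

definition monomial :: "('n::finite \<Rightarrow> nat) \<Rightarrow> real^'n \<Rightarrow> real" where
  "monomial \<alpha> x = (\<Prod>i\<in>UNIV. (x $ i) ^ (\<alpha> i))"

definition cube :: "real \<Rightarrow> (real^'n::finite) set" where
  "cube R = {x. \<forall>i. \<bar>x $ i\<bar> \<le> R}"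

definition Amat :: "('n::finite \<Rightarrow> nat) \<Rightarrow> ('n \<Rightarrow> nat) \<Rightarrow> real" where
  "Amat \<alpha> \<beta> =
     (if \<exists>i. 2 \<le> \<alpha> i \<and> \<beta> = \<alpha>(i := \<alpha> i - 2)
      then (let i = (SOME i. 2 \<le> \<alpha> i \<and> \<beta> = \<alpha>(i := \<alpha> i - 2))
            in real (\<alpha> i * (\<alpha> i - 1)))
      else 0)"

definition matvec :: "nat \<Rightarrow> (('n::finite \<Rightarrow> nat) \<Rightarrow> ('n \<Rightarrow> nat) \<Rightarrow> real)
    \<Rightarrow> (('n \<Rightarrow> nat) \<Rightarrow> real) \<Rightarrow> (('n \<Rightarrow> nat) \<Rightarrow> real)" where
  "matvec k M y = (\<lambda>\<alpha>. \<Sum>\<beta>\<in>multi_indices k. M \<alpha> \<beta> * y \<beta>)"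

definition expTA :: "nat \<Rightarrow> real \<Rightarrow> (('n::finite \<Rightarrow> nat) \<Rightarrow> real) \<Rightarrow> ('n \<Rightarrow> nat) \<Rightarrow> real" where
  "expTA k T y \<alpha> = (\<Sum>j. ((- T) ^ j / fact j) * ((matvec k Amat) ^^ j) y \<alpha>)"

definition sup_norm :: "nat \<Rightarrow> (('n::finite \<Rightarrow> nat) \<Rightarrow> real) \<Rightarrow> real" where
  "sup_norm k y = Max ((\<lambda>\<alpha>. \<bar>y \<alpha>\<bar>) ` multi_indices k)"

text \<open>A finite signed Radon measure on Omega is represented as P - N, where P, N are
  finite Borel measures on real^'n concentrated on Omega.\<close>
definition signed_meas_on :: "(real^'n::finite) set \<Rightarrow> (real^'n) measure \<Rightarrow> (real^'n) measure \<Rightarrow> bool" where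
  "signed_meas_on \<Omega> P N \<longleftrightarrow>
     sets P = sets borel \<and> sets N = sets borel \<and> finite_measure P \<and> finite_measure N \<and>
     emeasure P (UNIV - \<Omega>) = 0 \<and> emeasure N (UNIV - \<Omega>) = 0"

definition tv_norm :: "'a measure \<Rightarrow> 'a measure \<Rightarrow> real" where
  "tv_norm P N = Sup {(\<Sum>A\<in>\<A>. \<bar>measure P A - measure N A\<bar>) | \<A>.
       finite \<A> \<and> \<A> \<subseteq> sets P \<and> disjoint \<A>}"

definition signed_integral :: "'a measure \<Rightarrow> 'a measure \<Rightarrow> ('a \<Rightarrow> real) \<Rightarrow> real" where
  "signed_integral P N f = integral\<^sup>L P f - integral\<^sup>L N f"

definition feasible :: "(real^'n::finite) set \<Rightarrow> nat \<Rightarrow> real \<Rightarrow> (('n \<Rightarrow> nat) \<Rightarrow> real)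
    \<Rightarrow> (real^'n) measure \<Rightarrow> (real^'n) measure \<Rightarrow> bool" where
  "feasible \<Omega> k T y P N \<longleftrightarrow> signed_meas_on \<Omega> P N \<and>
     (\<forall>\<alpha>\<in>multi_indices k. signed_integral P N (monomial \<alpha>) = expTA k T y \<alpha>)"

definition is_solution :: "(real^'n::finite) set \<Rightarrow> nat \<Rightarrow> real \<Rightarrow> (('n \<Rightarrow> nat) \<Rightarrow> real)
    \<Rightarrow> (real^'n) measure \<Rightarrow> (real^'n) measure \<Rightarrow> bool" where
  "is_solution \<Omega> k T y P N \<longleftrightarrow> feasible \<Omega> k T y P N \<and>
     (\<forall>P' N'. feasible \<Omega> k T y P' N' \<longrightarrow> tv_norm P N \<le> tv_norm P' N')"

end

theory Submission
  imports Defs "HOL-Computational_Algebra.Polynomial"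
begin

text \<open>By minimality, the optimal value is at most the total variation of any atomic measure on the
  cube whose moments are m = e^(-TA) y. The rows of A^j are bounded by the falling factorials
  n (n - 1) ... (n - 2j + 1) with n = |\<alpha>|, so |m_\<alpha>| \<le> \<parallel>y\<parallel>_\<infinity> max(T,1)^(k div 2) H(|\<alpha>|), where
  H(n) = \<Sum>_j n! / ((n - 2j)! j!) \<le> (1 + \<surd>n)^n.

  The atomic measure lives on the grid h {0,...,k}^d with h = R/k. Tensor products of the divided
  differences with step h are dual to the products of the Newton polynomials
  N_g(t) = \<Prod>_(l<g) (t - l h), so the weights come from expanding m in the Newton basis. The
  divided differences have absolute weight sum 2^g / (g! h^g) and, when |m_\<alpha>| \<le> L c^|\<alpha>|, the
  Newton coefficients of m are bounded by L \<Prod>_(l<g) (c + l h) in each coordinate. Summing over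
  multi-indices gives in each coordinate a truncated binomial series bounded by (1 - 2/z)^(-ck/R),
  and choosing L, c, z depending on k yields the constant.\<close>

section \<open>Atomic competitors\<close>

definition atomic_measure :: "'i set \<Rightarrow> ('i \<Rightarrow> real) \<Rightarrow> ('i \<Rightarrow> 'a::topological_space) \<Rightarrow> 'a measure" where
  "atomic_measure I w x = distr (density (count_space I) (\<lambda>i. ennreal (w i))) borel x"

lemma sets_atomic_measure [simp]: "sets (atomic_measure I w x) = sets borel"
  by (simp add: atomic_measure_def)

lemma space_atomic_measure [simp]: "space (atomic_measure I w x) = UNIV"
  by (simp add: atomic_measure_def)

lemma emeasure_atomic_measure:
  assumes "finite I" and "A \<in> sets borel"
  shows "emeasure (atomic_measure I w x) A = (\<Sum>i\<in>I \<inter> x -` A. ennreal (w i))"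
proof -
  have "emeasure (atomic_measure I w x) A
      = emeasure (density (count_space I) (\<lambda>i. ennreal (w i))) (x -` A \<inter> I)"
    using assms(2) unfolding atomic_measure_def by (subst emeasure_distr) auto
  also have "\<dots> = (\<Sum>i\<in>I. ennreal (w i) * indicator (x -` A \<inter> I) i)"
    using assms(1) by (subst emeasure_density) (auto simp: nn_integral_count_space_finite)
  also have "\<dots> = (\<Sum>i\<in>I. if i \<in> x -` A then ennreal (w i) else 0)"
    by (intro sum.cong) (auto simp: indicator_def)
  also have "\<dots> = (\<Sum>i\<in>I \<inter> x -` A. ennreal (w i))"
    using assms(1) by (simp add: sum.inter_restrict)
  finally show ?thesis .
qed

lemma finite_measure_atomic_measure: "finite I \<Longrightarrow> finite_measure (atomic_measure I w x)"
  by (rule finite_measureI) (simp add: emeasure_atomic_measure)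

lemma measure_atomic_measure_space:
  assumes "finite I" and "\<And>i. i \<in> I \<Longrightarrow> 0 \<le> w i"
  shows "measure (atomic_measure I w x) UNIV = (\<Sum>i\<in>I. w i)"
  using assms by (simp add: measure_def emeasure_atomic_measure sum_nonneg)

lemma integral_atomic_measure:
  assumes "finite I" and "\<And>i. i \<in> I \<Longrightarrow> 0 \<le> w i" and "f \<in> borel_measurable borel"
  shows "integral\<^sup>L (atomic_measure I w x) f = (\<Sum>i\<in>I. w i * f (x i))"
proof -
  have "integral\<^sup>L (atomic_measure I w x) f
      = integral\<^sup>L (density (count_space I) (\<lambda>i. ennreal (w i))) (\<lambda>i. f (x i))"
    unfolding atomic_measure_def using assms(3) by (subst integral_distr) auto
  also have "\<dots> = integral\<^sup>L (count_space I) (\<lambda>i. w i *\<^sub>R f (x i))"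
    using assms by (subst integral_density) (auto simp: AE_count_space)
  also have "\<dots> = (\<Sum>i\<in>I. w i * f (x i))"
    using assms(1) by (simp add: lebesgue_integral_count_space_finite)
  finally show ?thesis .
qed

lemma tv_norm_le_total_mass:
  assumes P: "finite_measure P" and N: "finite_measure N" and sets_N: "sets N = sets P"
  shows "tv_norm P N \<le> measure P (space P) + measure N (space N)"
proof -
  have "(\<Sum>A\<in>\<A>. \<bar>measure P A - measure N A\<bar>) \<le> measure P (space P) + measure N (space N)"
    if "finite \<A>" "\<A> \<subseteq> sets P" "disjoint \<A>" for \<A>
  proof -
    have "(\<Sum>A\<in>\<A>. \<bar>measure P A - measure N A\<bar>) \<le> (\<Sum>A\<in>\<A>. measure P A) + (\<Sum>A\<in>\<A>. measure N A)"
      unfolding sum.distrib[symmetric] by (intro sum_mono) (auto simp: abs_le_iff)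
    also have "\<dots> = measure P (\<Union>\<A>) + measure N (\<Union>\<A>)"
      using that sets_N by (simp add: measure_Union' finite_measure.fmeasurable_eq_sets[OF P]
          finite_measure.fmeasurable_eq_sets[OF N] subset_eq)
    also have "\<dots> \<le> measure P (space P) + measure N (space N)"
      by (intro add_mono finite_measure.bounded_measure P N)
    finally show ?thesis .
  qed
  then show ?thesis
    unfolding tv_norm_def by (intro cSup_least) (auto intro!: exI[of _ "{}"])
qed

lemma closed_cube: "closed (cube R :: (real^'n::finite) set)"
proof -
  have "cube R = (\<Inter>i. {x::real^'n. \<bar>x $ i\<bar> \<le> R})"
    unfolding cube_def by auto
  then show ?thesis
    by (auto intro!: closed_INT closed_Collect_le continuous_intros)
qed

lemma borel_measurable_monomial [measurable]: "monomial \<alpha> \<in> borel_measurable borel"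
  unfolding monomial_def by measurable

lemma is_solution_tv_norm_le:
  fixes x :: "'i \<Rightarrow> real^'n::finite"
  assumes sol: "is_solution \<Omega> k T y P N" and \<Omega>: "\<Omega> \<in> sets borel"
    and I: "finite I" and x: "x ` I \<subseteq> \<Omega>"
    and moments: "\<And>\<alpha>. \<alpha> \<in> multi_indices k \<Longrightarrow> (\<Sum>i\<in>I. w i * monomial \<alpha> (x i)) = expTA k T y \<alpha>"
  shows "tv_norm P N \<le> (\<Sum>i\<in>I. \<bar>w i\<bar>)"
proof -
  define P' where "P' = atomic_measure I (\<lambda>i. max (w i) 0) x"
  define N' where "N' = atomic_measure I (\<lambda>i. max (- w i) 0) x"
  have outside: "I \<inter> x -` (UNIV - \<Omega>) = {}"
    using x by auto
  have "signed_meas_on \<Omega> P' N'"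
    using I \<Omega> outside unfolding signed_meas_on_def P'_def N'_def
    by (simp add: finite_measure_atomic_measure emeasure_atomic_measure)
  moreover have "signed_integral P' N' (monomial \<alpha>) = expTA k T y \<alpha>" if "\<alpha> \<in> multi_indices k" for \<alpha>
  proof -
    have "signed_integral P' N' (monomial \<alpha>)
        = (\<Sum>i\<in>I. max (w i) 0 * monomial \<alpha> (x i)) - (\<Sum>i\<in>I. max (- w i) 0 * monomial \<alpha> (x i))"
      unfolding signed_integral_def P'_def N'_def using I by (simp add: integral_atomic_measure)
    also have "\<dots> = (\<Sum>i\<in>I. w i * monomial \<alpha> (x i))"
      unfolding sum_subtractf[symmetric] by (intro sum.cong) (auto simp: max_def algebra_simps)
    finally show ?thesis
      using moments[OF that] by simp
  qed
  ultimately have "feasible \<Omega> k T y P' N'"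
    unfolding feasible_def by blast
  then have "tv_norm P N \<le> tv_norm P' N'"
    using sol unfolding is_solution_def by blast
  also have "\<dots> \<le> measure P' UNIV + measure N' UNIV"
    using tv_norm_le_total_mass[of P' N'] I by (simp add: P'_def N'_def finite_measure_atomic_measure)
  also have "\<dots> = (\<Sum>i\<in>I. max (w i) 0) + (\<Sum>i\<in>I. max (- w i) 0)"
    unfolding P'_def N'_def using I by (simp add: measure_atomic_measure_space)
  also have "\<dots> = (\<Sum>i\<in>I. \<bar>w i\<bar>)"
    unfolding sum.distrib[symmetric] by (intro sum.cong) auto
  finally show ?thesis .
qed

section \<open>Growth of the moment data\<close>

definition index_box :: "nat \<Rightarrow> ('n::finite \<Rightarrow> nat) set" where
  "index_box k = PiE UNIV (\<lambda>_. {..k})"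

lemma finite_index_box: "finite (index_box k)"
  unfolding index_box_def by (intro finite_PiE) auto

lemma mem_index_box: "j \<in> index_box k \<longleftrightarrow> (\<forall>i. j i \<le> k)"
  unfolding index_box_def by (auto simp: PiE_UNIV_domain)

lemma multi_index_le: "\<alpha> \<in> multi_indices k \<Longrightarrow> \<alpha> i \<le> k"
proof -
  assume "\<alpha> \<in> multi_indices k"
  moreover have "\<alpha> i \<le> mi_norm1 \<alpha>"
    unfolding mi_norm1_def by (rule member_le_sum) auto
  ultimately show ?thesis
    by (auto simp: multi_indices_def)
qed

lemma multi_indices_subset_index_box: "multi_indices k \<subseteq> index_box k"
  using multi_index_le by (auto simp: mem_index_box)

lemma finite_multi_indices: "finite (multi_indices k :: ('n::finite \<Rightarrow> nat) set)"
  using finite_subset[OF multi_indices_subset_index_box finite_index_box] .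

lemma zero_in_multi_indices: "(\<lambda>_. 0) \<in> multi_indices k"
  by (simp add: multi_indices_def mi_norm1_def)

lemma abs_le_sup_norm: "\<alpha> \<in> multi_indices k \<Longrightarrow> \<bar>y \<alpha>\<bar> \<le> sup_norm k y"
  unfolding sup_norm_def by (rule Max_ge) (auto simp: finite_multi_indices)

lemma sup_norm_nonneg: "0 \<le> sup_norm k (y :: ('n::finite \<Rightarrow> nat) \<Rightarrow> real)"
  using abs_le_sup_norm[OF zero_in_multi_indices, of y k] by linarith

lemma Amat_neq_0_imp: "Amat \<alpha> \<beta> \<noteq> 0 \<Longrightarrow> \<exists>i. 2 \<le> \<alpha> i \<and> \<beta> = \<alpha>(i := \<alpha> i - 2)"
  unfolding Amat_def by (auto split: if_splits)

lemma Amat_fun_upd: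
  assumes "2 \<le> \<alpha> i"
  shows "Amat \<alpha> (\<alpha>(i := \<alpha> i - 2)) = real (\<alpha> i * (\<alpha> i - 1))"
proof -
  let ?P = "\<lambda>i'. 2 \<le> \<alpha> i' \<and> \<alpha>(i := \<alpha> i - 2) = \<alpha>(i' := \<alpha> i' - 2)"
  have ex: "\<exists>i'. ?P i'"
    using assms by blast
  have unique: "i' = i" if "?P i'" for i'
  proof (rule ccontr)
    assume "i' \<noteq> i"
    then have "(\<alpha>(i := \<alpha> i - 2)) i = (\<alpha>(i' := \<alpha> i' - 2)) i"
      using that by simp
    then show False
      using assms \<open>i' \<noteq> i\<close> by simp
  qed
  have "(SOME i'. ?P i') = i"
    using someI_ex[OF ex] unique by blast
  then show ?thesis
    unfolding Amat_def using ex by (simp add: Let_def)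
qed

lemma Amat_nonneg: "0 \<le> Amat \<alpha> \<beta>"
  unfolding Amat_def by (auto simp: Let_def)

lemma mi_norm1_fun_upd_minus_2:
  fixes \<alpha> :: "'n::finite \<Rightarrow> nat"
  assumes "2 \<le> \<alpha> i"
  shows "mi_norm1 (\<alpha>(i := \<alpha> i - 2)) = mi_norm1 \<alpha> - 2"
proof -
  have "mi_norm1 \<alpha> = \<alpha> i + (\<Sum>j\<in>UNIV - {i}. \<alpha> j)"
    and "mi_norm1 (\<alpha>(i := \<alpha> i - 2)) = (\<alpha> i - 2) + (\<Sum>j\<in>UNIV - {i}. \<alpha> j)"
    unfolding mi_norm1_def by (simp_all add: sum.remove[of UNIV i])
  then show ?thesis
    using assms by simp
qed

lemma sum_times_pred_le_mi_norm1:
  fixes \<alpha> :: "'n::finite \<Rightarrow> nat"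
  shows "(\<Sum>i\<in>UNIV. real (\<alpha> i * (\<alpha> i - 1))) \<le> real (mi_norm1 \<alpha> * (mi_norm1 \<alpha> - 1))"
proof -
  have times_pred: "real (m * (m - 1)) = real m * real m - real m" for m :: nat
    by (cases m) (auto simp: algebra_simps)
  have "(\<Sum>i\<in>UNIV. real (\<alpha> i) * real (\<alpha> i)) \<le> (\<Sum>i\<in>UNIV. real (\<alpha> i)) * (\<Sum>i\<in>UNIV. real (\<alpha> i))"
    unfolding sum_distrib_right
    by (intro sum_mono) (auto simp: sum_distrib_left intro!: member_le_sum)
  then show ?thesis
    unfolding times_pred mi_norm1_def by (simp add: sum_subtractf)
qed

lemma Amat_row_sum_le:
  fixes \<alpha> :: "'n::finite \<Rightarrow> nat"
  shows "(\<Sum>\<beta>\<in>multi_indices k. Amat \<alpha> \<beta>) \<le> real (mi_norm1 \<alpha> * (mi_norm1 \<alpha> - 1))"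
proof -
  define I where "I = {i. 2 \<le> \<alpha> i}"
  define f where "f i = \<alpha>(i := \<alpha> i - 2)" for i
  have "(\<Sum>\<beta>\<in>multi_indices k. Amat \<alpha> \<beta>) = (\<Sum>\<beta>\<in>multi_indices k \<inter> f ` I. Amat \<alpha> \<beta>)"
    by (intro sum.mono_neutral_right finite_multi_indices)
      (auto simp: I_def f_def dest: Amat_neq_0_imp)
  also have "\<dots> \<le> (\<Sum>\<beta>\<in>f ` I. Amat \<alpha> \<beta>)"
    by (intro sum_mono2) (auto simp: Amat_nonneg)
  also have "\<dots> \<le> (\<Sum>i\<in>I. Amat \<alpha> (f i))"
    using sum_image_le[of I "Amat \<alpha>" f] by (simp add: Amat_nonneg o_def)
  also have "\<dots> = (\<Sum>i\<in>I. real (\<alpha> i * (\<alpha> i - 1)))"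
    by (intro sum.cong) (auto simp: I_def f_def Amat_fun_upd)
  also have "\<dots> \<le> (\<Sum>i\<in>UNIV. real (\<alpha> i * (\<alpha> i - 1)))"
    by (intro sum_mono2) auto
  also have "\<dots> \<le> real (mi_norm1 \<alpha> * (mi_norm1 \<alpha> - 1))"
    by (rule sum_times_pred_le_mi_norm1)
  finally show ?thesis .
qed

definition falling_fact :: "nat \<Rightarrow> nat \<Rightarrow> real" where
  "falling_fact n m = (\<Prod>l<m. real (n - l))"

lemma falling_fact_nonneg: "0 \<le> falling_fact n m"
  unfolding falling_fact_def by (intro prod_nonneg) auto

lemma falling_fact_eq_0: "n < m \<Longrightarrow> falling_fact n m = 0"
  unfolding falling_fact_def by (intro prod_zero) (auto intro!: bexI[of _ n])

lemma falling_fact_Suc_Suc: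
  "falling_fact n (Suc (Suc m)) = real (n * (n - 1)) * falling_fact (n - 2) m"
proof -
  have "falling_fact n (Suc (Suc m)) = real (n - 0) * (real (n - 1) * (\<Prod>l<m. real (n - Suc (Suc l))))"
    unfolding falling_fact_def by (simp only: prod.lessThan_Suc_shift) simp
  also have "(\<Prod>l<m. real (n - Suc (Suc l))) = falling_fact (n - 2) m"
    unfolding falling_fact_def by (intro prod.cong) auto
  finally show ?thesis
    by simp
qed

lemma abs_matvec_Amat_power_le:
  fixes y :: "('n::finite \<Rightarrow> nat) \<Rightarrow> real"
  assumes "\<alpha> \<in> multi_indices k"
  shows "\<bar>((matvec k Amat) ^^ j) y \<alpha>\<bar> \<le> sup_norm k y * falling_fact (mi_norm1 \<alpha>) (2 * j)"
  using assms
proof (induction j arbitrary: \<alpha>)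
  case 0
  then show ?case
    by (simp add: falling_fact_def abs_le_sup_norm)
next
  case (Suc j)
  define n where "n = mi_norm1 \<alpha>"
  define s where "s = sup_norm k y"
  let ?v = "((matvec k Amat) ^^ j) y"
  have "\<bar>((matvec k Amat) ^^ Suc j) y \<alpha>\<bar> = \<bar>\<Sum>\<beta>\<in>multi_indices k. Amat \<alpha> \<beta> * ?v \<beta>\<bar>"
    by (simp add: matvec_def)
  also have "\<dots> \<le> (\<Sum>\<beta>\<in>multi_indices k. Amat \<alpha> \<beta> * \<bar>?v \<beta>\<bar>)"
    by (rule order.trans[OF sum_abs]) (simp add: abs_mult Amat_nonneg)
  also have "\<dots> \<le> (\<Sum>\<beta>\<in>multi_indices k. Amat \<alpha> \<beta> * (s * falling_fact (n - 2) (2 * j)))"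
  proof (intro sum_mono)
    fix \<beta> :: "'n \<Rightarrow> nat" assume \<beta>: "\<beta> \<in> multi_indices k"
    show "Amat \<alpha> \<beta> * \<bar>?v \<beta>\<bar> \<le> Amat \<alpha> \<beta> * (s * falling_fact (n - 2) (2 * j))"
    proof (cases "Amat \<alpha> \<beta> = 0")
      case False
      then obtain i where "2 \<le> \<alpha> i" "\<beta> = \<alpha>(i := \<alpha> i - 2)"
        by (auto dest: Amat_neq_0_imp)
      then have "mi_norm1 \<beta> = n - 2"
        by (simp add: n_def mi_norm1_fun_upd_minus_2)
      then show ?thesis
        using Suc.IH[OF \<beta>] by (intro mult_left_mono) (auto simp: s_def Amat_nonneg)
    qed simp
  qed
  also have "\<dots> = s * falling_fact (n - 2) (2 * j) * (\<Sum>\<beta>\<in>multi_indices k. Amat \<alpha> \<beta>)"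
    by (simp add: sum_distrib_left sum_distrib_right mult_ac)
  also have "\<dots> \<le> s * falling_fact (n - 2) (2 * j) * real (n * (n - 1))"
    unfolding n_def s_def
    by (intro mult_left_mono Amat_row_sum_le mult_nonneg_nonneg sup_norm_nonneg falling_fact_nonneg)
  also have "\<dots> = s * falling_fact n (Suc (Suc (2 * j)))"
    by (simp add: falling_fact_Suc_Suc)
  finally show ?case
    by (simp add: n_def s_def)
qed

definition heat_growth :: "nat \<Rightarrow> real" where
  "heat_growth n = (\<Sum>j\<le>n. falling_fact n (2 * j) / fact j)"

lemma abs_expTA_le:
  fixes y :: "('n::finite \<Rightarrow> nat) \<Rightarrow> real"
  assumes \<alpha>: "\<alpha> \<in> multi_indices k" and T: "T > 0"
  shows "\<bar>expTA k T y \<alpha>\<bar> \<le> sup_norm k y * max T 1 ^ (k div 2) * heat_growth (mi_norm1 \<alpha>)"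
proof -
  define n where "n = mi_norm1 \<alpha>"
  define s where "s = sup_norm k y"
  define f where "f j = ((- T) ^ j / fact j) * ((matvec k Amat) ^^ j) y \<alpha>" for j
  have "n \<le> k"
    using \<alpha> by (simp add: multi_indices_def n_def)
  have "f j = 0" if "j \<notin> {..k}" for j
    using abs_matvec_Amat_power_le[OF \<alpha>, of j y] that \<open>n \<le> k\<close>
    by (simp add: f_def falling_fact_eq_0 flip: n_def)
  then have "expTA k T y \<alpha> = (\<Sum>j\<le>k. f j)"
    unfolding expTA_def f_def[symmetric] by (intro suminf_finite) auto
  then have "\<bar>expTA k T y \<alpha>\<bar> \<le> (\<Sum>j\<le>k. \<bar>f j\<bar>)"
    by (simp add: sum_abs)
  also have "\<dots> \<le> (\<Sum>j\<le>k. s * max T 1 ^ (k div 2) * (falling_fact n (2 * j) / fact j))"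
  proof (intro sum_mono)
    fix j
    have "\<bar>f j\<bar> = (T ^ j / fact j) * \<bar>((matvec k Amat) ^^ j) y \<alpha>\<bar>"
      using T by (simp add: f_def abs_mult power_abs)
    also have "\<dots> \<le> (T ^ j / fact j) * (s * falling_fact n (2 * j))"
      using abs_matvec_Amat_power_le[OF \<alpha>, of j y] T
      by (intro mult_left_mono) (auto simp: s_def n_def)
    also have "\<dots> \<le> (max T 1 ^ (k div 2) / fact j) * (s * falling_fact n (2 * j))"
    proof (cases "2 * j \<le> n")
      case True
      then have "j \<le> k div 2"
        using \<open>n \<le> k\<close> by linarith
      then have "T ^ j \<le> max T 1 ^ (k div 2)"
        using T by (intro order.trans[OF power_mono[of T "max T 1"]] power_increasing) auto
      then show ?thesis
        using sup_norm_nonneg falling_fact_nonneg unfolding s_def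
        by (intro mult_right_mono divide_right_mono mult_nonneg_nonneg) auto
    qed (simp add: falling_fact_eq_0)
    finally show "\<bar>f j\<bar> \<le> s * max T 1 ^ (k div 2) * (falling_fact n (2 * j) / fact j)"
      by (simp add: field_simps)
  qed
  also have "\<dots> = s * max T 1 ^ (k div 2) * (\<Sum>j\<le>k. falling_fact n (2 * j) / fact j)"
    by (simp add: sum_distrib_left)
  also have "(\<Sum>j\<le>k. falling_fact n (2 * j) / fact j) = heat_growth n"
    unfolding heat_growth_def using \<open>n \<le> k\<close>
    by (intro sum.mono_neutral_right) (auto simp: falling_fact_eq_0)
  finally show ?thesis
    by (simp add: n_def s_def)
qed

section \<open>Newton interpolation with step \<open>h\<close>\<close>

definition newton_poly :: "real \<Rightarrow> nat \<Rightarrow> real poly" where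
  "newton_poly h g = (\<Prod>l<g. [:- (real l * h), 1:])"

fun fdiff_coeff :: "nat \<Rightarrow> nat \<Rightarrow> real" where
  "fdiff_coeff 0 j = (if j = 0 then 1 else 0)"
| "fdiff_coeff (Suc g) j = (if j = 0 then 0 else fdiff_coeff g (j - 1)) - fdiff_coeff g j"

definition fdiff :: "real \<Rightarrow> nat \<Rightarrow> (real \<Rightarrow> real) \<Rightarrow> real" where
  "fdiff h g f = (\<Sum>j\<le>g. fdiff_coeff g j * f (real j * h))"

lemma fdiff_coeff_eq_0: "g < j \<Longrightarrow> fdiff_coeff g j = 0"
  by (induction g arbitrary: j) auto

lemma sum_abs_fdiff_coeff_le: "(\<Sum>j\<le>g. \<bar>fdiff_coeff g j\<bar>) \<le> 2 ^ g"
proof (induction g)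
  case 0
  then show ?case
    by simp
next
  case (Suc g)
  have "(\<Sum>j\<le>Suc g. \<bar>fdiff_coeff (Suc g) j\<bar>)
      \<le> (\<Sum>j\<le>Suc g. \<bar>if j = 0 then 0 else fdiff_coeff g (j - 1)\<bar>) + (\<Sum>j\<le>Suc g. \<bar>fdiff_coeff g j\<bar>)"
    by (simp only: fdiff_coeff.simps sum.distrib[symmetric]) (intro sum_mono abs_triangle_ineq4)
  also have "(\<Sum>j\<le>Suc g. \<bar>if j = 0 then 0 else fdiff_coeff g (j - 1)\<bar>) = (\<Sum>j\<le>g. \<bar>fdiff_coeff g j\<bar>)"
    by (subst sum.atMost_Suc_shift) simp
  also have "(\<Sum>j\<le>Suc g. \<bar>fdiff_coeff g j\<bar>) = (\<Sum>j\<le>g. \<bar>fdiff_coeff g j\<bar>)"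
    by (simp add: fdiff_coeff_eq_0)
  finally show ?case
    using Suc.IH by simp
qed

lemma fdiff_Suc: "fdiff h (Suc g) f = fdiff h g (\<lambda>t. f (t + h) - f t)"
proof -
  have "fdiff h (Suc g) f = (\<Sum>j\<le>Suc g. (if j = 0 then 0 else fdiff_coeff g (j - 1)) * f (real j * h))
      - (\<Sum>j\<le>Suc g. fdiff_coeff g j * f (real j * h))"
    unfolding fdiff_def by (simp add: left_diff_distrib sum_subtractf)
  also have "(\<Sum>j\<le>Suc g. (if j = 0 then 0 else fdiff_coeff g (j - 1)) * f (real j * h))
      = (\<Sum>j\<le>g. fdiff_coeff g j * f (real j * h + h))"
    by (subst sum.atMost_Suc_shift) (simp add: algebra_simps)
  also have "(\<Sum>j\<le>Suc g. fdiff_coeff g j * f (real j * h)) = (\<Sum>j\<le>g. fdiff_coeff g j * f (real j * h))"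
    by (simp add: fdiff_coeff_eq_0)
  finally show ?thesis
    unfolding fdiff_def by (simp add: sum_subtractf right_diff_distrib)
qed

lemma fdiff_cmult: "fdiff h g (\<lambda>t. c * f t) = c * fdiff h g f"
  unfolding fdiff_def by (simp add: sum_distrib_left mult_ac)

lemma fdiff_sum: "finite S \<Longrightarrow> fdiff h g (\<lambda>t. \<Sum>e\<in>S. F e t) = (\<Sum>e\<in>S. fdiff h g (F e))"
  unfolding fdiff_def by (simp add: sum_distrib_left sum.swap[of _ S])

lemma poly_newton_poly: "poly (newton_poly h e) t = (\<Prod>l<e. t - real l * h)"
  unfolding newton_poly_def by (simp add: poly_prod)

lemma newton_poly_Suc: "newton_poly h (Suc e) = newton_poly h e * [:- (real e * h), 1:]"
  unfolding newton_poly_def by simp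

lemma poly_newton_poly_Suc_diff:
  "poly (newton_poly h (Suc e)) (t + h) - poly (newton_poly h (Suc e)) t
     = real (Suc e) * h * poly (newton_poly h e) t"
proof -
  have "poly (newton_poly h (Suc e)) (t + h) = (t + h) * poly (newton_poly h e) t"
    unfolding poly_newton_poly by (subst prod.lessThan_Suc_shift) (simp add: algebra_simps)
  moreover have "poly (newton_poly h (Suc e)) t = poly (newton_poly h e) t * (t - real e * h)"
    unfolding poly_newton_poly by simp
  ultimately show ?thesis
    by (simp add: algebra_simps)
qed

lemma poly_newton_poly_0: "poly (newton_poly h e) 0 = (if e = 0 then 1 else 0)"
  unfolding poly_newton_poly by (cases e) (auto simp: prod.lessThan_Suc_shift)

lemma fdiff_newton_poly: "fdiff h g (poly (newton_poly h e)) = (if g = e then fact g * h ^ g else 0)"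
proof (induction g arbitrary: e)
  case 0
  then show ?case
    by (simp add: fdiff_def poly_newton_poly_0)
next
  case (Suc g)
  show ?case
  proof (cases e)
    case 0
    then have "fdiff h (Suc g) (poly (newton_poly h e)) = fdiff h g (\<lambda>t. 0)"
      by (simp add: fdiff_Suc newton_poly_def)
    then show ?thesis
      using 0 by (simp add: fdiff_def)
  next
    case (Suc e')
    have "fdiff h (Suc g) (poly (newton_poly h e))
        = fdiff h g (\<lambda>t. (real (Suc e') * h) * poly (newton_poly h e') t)"
      unfolding fdiff_Suc Suc poly_newton_poly_Suc_diff by simp
    also have "\<dots> = real (Suc e') * h * fdiff h g (poly (newton_poly h e'))"
      by (rule fdiff_cmult)
    finally show ?thesis
      using Suc.IH[of e'] Suc by (auto simp: algebra_simps)
  qed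
qed

lemma degree_newton_poly: "degree (newton_poly h g) = g"
  and coeff_newton_poly_degree: "coeff (newton_poly h g) g = 1"
proof (induction g)
  case 0
  { case 1 show ?case by (simp add: newton_poly_def) }
  { case 2 show ?case by (simp add: newton_poly_def) }
next
  case (Suc g)
  have "newton_poly h g \<noteq> 0"
    using Suc.IH(2) by auto
  then show degree: "degree (newton_poly h (Suc g)) = Suc g"
    unfolding newton_poly_Suc using Suc.IH(1) by (subst degree_mult_eq) auto
  have "coeff (newton_poly h (Suc g)) (Suc g) = lead_coeff (newton_poly h (Suc g))"
    using degree by simp
  also have "\<dots> = lead_coeff (newton_poly h g) * lead_coeff [:- (real g * h), 1:]"
    unfolding newton_poly_Suc by (rule lead_coeff_mult)
  finally show "coeff (newton_poly h (Suc g)) (Suc g) = 1"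
    using Suc.IH by simp
qed

lemma newton_poly_basis:
  assumes "degree p \<le> b"
  shows "\<exists>\<sigma>. p = (\<Sum>e\<le>b. smult (\<sigma> e) (newton_poly h e))"
  using assms
proof (induction b arbitrary: p)
  case 0
  then have "p = smult (coeff p 0) (newton_poly h 0)"
    by (simp add: newton_poly_def degree_0_id)
  then show ?case
    by (intro exI[of _ "\<lambda>_. coeff p 0"]) simp
next
  case (Suc b)
  define q where "q = p - smult (coeff p (Suc b)) (newton_poly h (Suc b))"
  have "degree q \<le> b"
  proof (rule degree_le, intro allI impI)
    fix i assume "b < i"
    show "coeff q i = 0"
    proof (cases "i = Suc b")
      case False
      then have "degree p < i" "degree (newton_poly h (Suc b)) < i"
        using \<open>b < i\<close> Suc.prems by (auto simp: degree_newton_poly)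
      then show ?thesis
        by (simp add: q_def coeff_eq_0)
    qed (simp add: q_def coeff_newton_poly_degree)
  qed
  then obtain \<sigma> where "q = (\<Sum>e\<le>b. smult (\<sigma> e) (newton_poly h e))"
    using Suc.IH by blast
  then have "p = (\<Sum>e\<le>Suc b. smult ((\<sigma>(Suc b := coeff p (Suc b))) e) (newton_poly h e))"
    by (simp add: q_def algebra_simps)
  then show ?case
    by blast
qed

lemma fdiff_newton_poly_sum:
  "fdiff h g (poly (\<Sum>e\<le>b. smult (\<sigma> e) (newton_poly h e)))
     = (if g \<le> b then \<sigma> g * (fact g * h ^ g) else 0)"
proof -
  have "poly (\<Sum>e\<le>b. smult (\<sigma> e) (newton_poly h e)) = (\<lambda>t. \<Sum>e\<le>b. \<sigma> e * poly (newton_poly h e) t)"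
    by (simp add: poly_sum fun_eq_iff)
  then have "fdiff h g (poly (\<Sum>e\<le>b. smult (\<sigma> e) (newton_poly h e)))
      = (\<Sum>e\<le>b. \<sigma> e * fdiff h g (poly (newton_poly h e)))"
    by (simp add: fdiff_sum fdiff_cmult)
  also have "\<dots> = (\<Sum>e\<le>b. if g = e then \<sigma> g * (fact g * h ^ g) else 0)"
    by (intro sum.cong) (auto simp: fdiff_newton_poly)
  finally show ?thesis
    by simp
qed

lemma power_eq_newton_sum:
  obtains \<sigma> where "monom (1::real) b = (\<Sum>e\<le>b. smult (\<sigma> e) (newton_poly h e))"
    and "(\<lambda>t. t ^ b) = poly (\<Sum>e\<le>b. smult (\<sigma> e) (newton_poly h e))"
proof -
  obtain \<sigma> where \<sigma>: "monom (1::real) b = (\<Sum>e\<le>b. smult (\<sigma> e) (newton_poly h e))"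
    using newton_poly_basis[of "monom (1::real) b" b] by (auto simp: degree_monom_eq)
  moreover have "(\<lambda>t. t ^ b) = poly (monom (1::real) b)"
    by (simp add: poly_monom fun_eq_iff)
  ultimately show ?thesis
    using that by simp
qed

lemma fdiff_power_eq_0: "b < g \<Longrightarrow> fdiff h g (\<lambda>t. t ^ b) = 0"
  by (rule power_eq_newton_sum[of b h]) (simp add: fdiff_newton_poly_sum)

lemma newton_expansion_power:
  assumes "h > 0" and "b \<le> K"
  shows "(\<Sum>g\<le>K. coeff (newton_poly h g) a * (fdiff h g (\<lambda>t. t ^ b) / (fact g * h ^ g)))
    = (if a = b then 1 else 0)"
proof -
  obtain \<sigma> where monom: "monom (1::real) b = (\<Sum>e\<le>b. smult (\<sigma> e) (newton_poly h e))"
    and power: "(\<lambda>t. t ^ b) = poly (\<Sum>e\<le>b. smult (\<sigma> e) (newton_poly h e))"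
    by (rule power_eq_newton_sum)
  have "(\<Sum>g\<le>K. coeff (newton_poly h g) a * (fdiff h g (\<lambda>t. t ^ b) / (fact g * h ^ g)))
      = (\<Sum>g\<le>b. \<sigma> g * coeff (newton_poly h g) a)"
    unfolding power fdiff_newton_poly_sum using assms
    by (intro sum.mono_neutral_cong_right) auto
  also have "\<dots> = coeff (monom 1 b) a"
    unfolding monom by (simp add: coeff_sum)
  finally show ?thesis
    by (simp add: coeff_monom)
qed

lemma weighted_abs_coeff_sum_mult_linear_le:
  fixes p :: "real poly"
  assumes c: "0 \<le> c"
  shows "(\<Sum>a\<le>K. c ^ a * \<bar>coeff (p * [:- r, 1:]) a\<bar>) \<le> (c + \<bar>r\<bar>) * (\<Sum>a\<le>K. c ^ a * \<bar>coeff p a\<bar>)"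
proof -
  have "p * [:- r, 1:] = pCons 0 p - smult r p"
    by (simp add: algebra_simps)
  then have "(\<Sum>a\<le>K. c ^ a * \<bar>coeff (p * [:- r, 1:]) a\<bar>)
      \<le> (\<Sum>a\<le>K. c ^ a * \<bar>coeff (pCons 0 p) a\<bar>) + (\<Sum>a\<le>K. c ^ a * (\<bar>r\<bar> * \<bar>coeff p a\<bar>))"
    unfolding sum.distrib[symmetric] using c
    by (intro sum_mono) (auto simp: abs_mult algebra_simps
        intro!: order.trans[OF mult_left_mono[OF abs_triangle_ineq4]])
  also have "(\<Sum>a\<le>K. c ^ a * \<bar>coeff (pCons 0 p) a\<bar>) \<le> c * (\<Sum>a\<le>K. c ^ a * \<bar>coeff p a\<bar>)"
  proof (cases K)
    case (Suc K')
    have "(\<Sum>a\<le>K. c ^ a * \<bar>coeff (pCons 0 p) a\<bar>) = c * (\<Sum>a\<le>K'. c ^ a * \<bar>coeff p a\<bar>)"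
      unfolding Suc by (subst sum.atMost_Suc_shift) (simp add: sum_distrib_left mult_ac)
    also have "\<dots> \<le> c * (\<Sum>a\<le>K. c ^ a * \<bar>coeff p a\<bar>)"
      using c Suc by (intro mult_left_mono sum_mono2) auto
    finally show ?thesis .
  qed (use c in simp)
  also have "(\<Sum>a\<le>K. c ^ a * (\<bar>r\<bar> * \<bar>coeff p a\<bar>)) = \<bar>r\<bar> * (\<Sum>a\<le>K. c ^ a * \<bar>coeff p a\<bar>)"
    by (simp add: sum_distrib_left mult_ac)
  finally show ?thesis
    by (simp add: distrib_right)
qed

lemma weighted_abs_coeff_sum_newton_poly_le:
  assumes c: "0 \<le> c" and h: "0 \<le> h"
  shows "(\<Sum>a\<le>K. c ^ a * \<bar>coeff (newton_poly h g) a\<bar>) \<le> (\<Prod>l<g. c + real l * h)"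
proof (induction g)
  case 0
  have "(\<Sum>a\<le>K. c ^ a * \<bar>coeff (newton_poly h 0) a\<bar>) = (\<Sum>a\<le>K. if a = 0 then 1 else 0)"
    by (intro sum.cong) (auto simp: newton_poly_def coeff_1)
  then show ?case
    by simp
next
  case (Suc g)
  have "(\<Sum>a\<le>K. c ^ a * \<bar>coeff (newton_poly h (Suc g)) a\<bar>)
      \<le> (c + real g * h) * (\<Sum>a\<le>K. c ^ a * \<bar>coeff (newton_poly h g) a\<bar>)"
    using weighted_abs_coeff_sum_mult_linear_le[OF c, where K = K and p = "newton_poly h g" and r = "real g * h"] h
    by (simp add: newton_poly_Suc)
  also have "\<dots> \<le> (c + real g * h) * (\<Prod>l<g. c + real l * h)"
    using Suc.IH c h by (intro mult_left_mono) auto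
  finally show ?case
    by (simp add: mult_ac)
qed

section \<open>An atomic measure on a grid with prescribed moments\<close>

definition fdiff_weight :: "real \<Rightarrow> nat \<Rightarrow> nat \<Rightarrow> real" where
  "fdiff_weight h g j = fdiff_coeff g j / (fact g * h ^ g)"

definition newton_moment :: "nat \<Rightarrow> real \<Rightarrow> (('n::finite \<Rightarrow> nat) \<Rightarrow> real) \<Rightarrow> ('n \<Rightarrow> nat) \<Rightarrow> real" where
  "newton_moment k h m \<gamma> = (\<Sum>\<alpha>\<in>multi_indices k. m \<alpha> * (\<Prod>i\<in>UNIV. coeff (newton_poly h (\<gamma> i)) (\<alpha> i)))"

text \<open>The functionals \<open>f \<mapsto> \<Sum>j. fdiff_weight h g j * f (j * h)\<close> are the divided differences,
  dual to the Newton basis; tensorising them yields a measure that takes the value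
  \<open>newton_moment k h m \<gamma>\<close> on the product Newton polynomial of index \<open>\<gamma>\<close>, hence the moments \<open>m\<close>.\<close>

definition grid_weight :: "nat \<Rightarrow> real \<Rightarrow> (('n::finite \<Rightarrow> nat) \<Rightarrow> real) \<Rightarrow> ('n \<Rightarrow> nat) \<Rightarrow> real" where
  "grid_weight k h m j =
     (\<Sum>\<gamma>\<in>multi_indices k. newton_moment k h m \<gamma> * (\<Prod>i\<in>UNIV. fdiff_weight h (\<gamma> i) (j i)))"

definition grid_point :: "real \<Rightarrow> ('n::finite \<Rightarrow> nat) \<Rightarrow> real^'n" where
  "grid_point h j = (\<chi> i. real (j i) * h)"

lemma sum_fdiff_weight_power:
  assumes "g \<le> k"
  shows "(\<Sum>j\<le>k. fdiff_weight h g j * (real j * h) ^ b) = fdiff h g (\<lambda>t. t ^ b) / (fact g * h ^ g)"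
proof -
  have "(\<Sum>j\<le>k. fdiff_weight h g j * (real j * h) ^ b) = (\<Sum>j\<le>g. fdiff_weight h g j * (real j * h) ^ b)"
    using assms by (intro sum.mono_neutral_right) (auto simp: fdiff_weight_def fdiff_coeff_eq_0)
  then show ?thesis
    by (simp add: fdiff_weight_def fdiff_def sum_divide_distrib)
qed

lemma newton_moment_duality:
  fixes m :: "('n::finite \<Rightarrow> nat) \<Rightarrow> real"
  assumes h: "h > 0" and \<beta>: "\<beta> \<in> multi_indices k"
  shows "(\<Sum>\<gamma>\<in>index_box k. newton_moment k h m \<gamma>
      * (\<Prod>i\<in>UNIV. fdiff h (\<gamma> i) (\<lambda>t. t ^ \<beta> i) / (fact (\<gamma> i) * h ^ \<gamma> i))) = m \<beta>"
proof -
  define D where "D g b = fdiff h g (\<lambda>t. t ^ b) / (fact g * h ^ g)" for g b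
  define C where "C a g = coeff (newton_poly h g) a" for a g
  have "(\<Sum>\<gamma>\<in>index_box k. newton_moment k h m \<gamma> * (\<Prod>i\<in>UNIV. D (\<gamma> i) (\<beta> i)))
      = (\<Sum>\<alpha>\<in>multi_indices k. m \<alpha> * (\<Sum>\<gamma>\<in>index_box k. \<Prod>i\<in>UNIV. C (\<alpha> i) (\<gamma> i) * D (\<gamma> i) (\<beta> i)))"
    unfolding newton_moment_def C_def
    by (simp add: sum_distrib_right sum_distrib_left prod.distrib mult_ac sum.swap[of _ "index_box k"])
  also have "\<dots> = (\<Sum>\<alpha>\<in>multi_indices k. m \<alpha> * (\<Prod>i\<in>UNIV. \<Sum>g\<le>k. C (\<alpha> i) g * D g (\<beta> i)))"
    unfolding index_box_def by (subst prod_sum_PiE) auto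
  also have "\<dots> = (\<Sum>\<alpha>\<in>multi_indices k. m \<alpha> * (if \<alpha> = \<beta> then 1 else 0))"
  proof (intro sum.cong refl arg_cong2[where f = "(*)"])
    fix \<alpha> :: "'n \<Rightarrow> nat"
    have "(\<Sum>g\<le>k. C (\<alpha> i) g * D g (\<beta> i)) = (if \<alpha> i = \<beta> i then 1 else 0)" for i
      unfolding C_def D_def using newton_expansion_power[OF h multi_index_le[OF \<beta>]] by simp
    then show "(\<Prod>i\<in>UNIV. \<Sum>g\<le>k. C (\<alpha> i) g * D g (\<beta> i)) = (if \<alpha> = \<beta> then 1 else 0)"
      by (auto simp: prod_zero_iff fun_eq_iff)
  qed
  also have "\<dots> = m \<beta>"
    using \<beta> by (simp add: if_distrib finite_multi_indices cong: if_cong)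
  finally show ?thesis
    by (simp add: D_def)
qed

lemma grid_weight_moments:
  fixes m :: "('n::finite \<Rightarrow> nat) \<Rightarrow> real"
  assumes h: "h > 0" and \<beta>: "\<beta> \<in> multi_indices k"
  shows "(\<Sum>j\<in>index_box k. grid_weight k h m j * monomial \<beta> (grid_point h j)) = m \<beta>"
proof -
  define D where "D g b = fdiff h g (\<lambda>t. t ^ b) / (fact g * h ^ g)" for g b
  have "(\<Sum>j\<in>index_box k. grid_weight k h m j * monomial \<beta> (grid_point h j))
      = (\<Sum>\<gamma>\<in>multi_indices k. newton_moment k h m \<gamma>
          * (\<Sum>j\<in>index_box k. \<Prod>i\<in>UNIV. fdiff_weight h (\<gamma> i) (j i) * (real (j i) * h) ^ \<beta> i))"
    unfolding grid_weight_def monomial_def grid_point_def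
    by (simp add: sum_distrib_right sum_distrib_left prod.distrib mult_ac sum.swap[of _ "index_box k"])
  also have "\<dots> = (\<Sum>\<gamma>\<in>multi_indices k. newton_moment k h m \<gamma> * (\<Prod>i\<in>UNIV. D (\<gamma> i) (\<beta> i)))"
  proof (intro sum.cong refl arg_cong2[where f = "(*)"])
    fix \<gamma> :: "'n \<Rightarrow> nat" assume "\<gamma> \<in> multi_indices k"
    then show "(\<Sum>j\<in>index_box k. \<Prod>i\<in>UNIV. fdiff_weight h (\<gamma> i) (j i) * (real (j i) * h) ^ \<beta> i)
        = (\<Prod>i\<in>UNIV. D (\<gamma> i) (\<beta> i))"
      unfolding index_box_def D_def
      by (subst prod_sum_PiE[symmetric]) (auto simp: sum_fdiff_weight_power multi_index_le)
  qed
  also have "\<dots> = (\<Sum>\<gamma>\<in>index_box k. newton_moment k h m \<gamma> * (\<Prod>i\<in>UNIV. D (\<gamma> i) (\<beta> i)))"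
  proof (rule sum.mono_neutral_left[OF finite_index_box multi_indices_subset_index_box], rule ballI)
    fix \<gamma> :: "'n \<Rightarrow> nat" assume \<gamma>: "\<gamma> \<in> index_box k - multi_indices k"
    have "\<not> (\<forall>i. \<gamma> i \<le> \<beta> i)"
    proof
      assume "\<forall>i. \<gamma> i \<le> \<beta> i"
      then have "mi_norm1 \<gamma> \<le> mi_norm1 \<beta>"
        unfolding mi_norm1_def by (intro sum_mono) auto
      then show False
        using \<gamma> \<beta> by (simp add: multi_indices_def)
    qed
    then obtain i where "\<beta> i < \<gamma> i"
      by (auto simp: not_le)
    then have "D (\<gamma> i) (\<beta> i) = 0"
      by (simp add: D_def fdiff_power_eq_0)
    then show "newton_moment k h m \<gamma> * (\<Prod>i\<in>UNIV. D (\<gamma> i) (\<beta> i)) = 0"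
      by (auto simp: prod_zero_iff)
  qed
  also have "\<dots> = m \<beta>"
    unfolding D_def by (rule newton_moment_duality[OF h \<beta>])
  finally show ?thesis .
qed

lemma sum_abs_fdiff_weight_le:
  assumes h: "h > 0" and "g \<le> k"
  shows "(\<Sum>j\<le>k. \<bar>fdiff_weight h g j\<bar>) \<le> 2 ^ g / (fact g * h ^ g)"
proof -
  have "(\<Sum>j\<le>k. \<bar>fdiff_weight h g j\<bar>) = (\<Sum>j\<le>g. \<bar>fdiff_weight h g j\<bar>)"
    using assms by (intro sum.mono_neutral_right) (auto simp: fdiff_weight_def fdiff_coeff_eq_0)
  also have "\<dots> = (\<Sum>j\<le>g. \<bar>fdiff_coeff g j\<bar>) / (fact g * h ^ g)"
    using h by (simp add: fdiff_weight_def sum_divide_distrib abs_divide)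
  also have "\<dots> \<le> 2 ^ g / (fact g * h ^ g)"
    using h sum_abs_fdiff_coeff_le[of g] by (intro divide_right_mono) auto
  finally show ?thesis .
qed

lemma sum_abs_grid_weight_le_newton_moment:
  fixes m :: "('n::finite \<Rightarrow> nat) \<Rightarrow> real"
  assumes h: "h > 0"
  shows "(\<Sum>j\<in>index_box k. \<bar>grid_weight k h m j\<bar>)
    \<le> (\<Sum>\<gamma>\<in>multi_indices k. \<bar>newton_moment k h m \<gamma>\<bar> * (\<Prod>i\<in>UNIV. 2 ^ \<gamma> i / (fact (\<gamma> i) * h ^ \<gamma> i)))"
proof -
  have "(\<Sum>j\<in>index_box k. \<bar>grid_weight k h m j\<bar>)
      \<le> (\<Sum>j\<in>index_box k. \<Sum>\<gamma>\<in>multi_indices k.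
           \<bar>newton_moment k h m \<gamma>\<bar> * (\<Prod>i\<in>UNIV. \<bar>fdiff_weight h (\<gamma> i) (j i)\<bar>))"
    unfolding grid_weight_def by (intro sum_mono order.trans[OF sum_abs]) (simp add: abs_mult abs_prod)
  also have "\<dots> = (\<Sum>\<gamma>\<in>multi_indices k.
      \<bar>newton_moment k h m \<gamma>\<bar> * (\<Prod>i\<in>UNIV. \<Sum>j\<le>k. \<bar>fdiff_weight h (\<gamma> i) j\<bar>))"
    unfolding index_box_def by (subst sum.swap) (simp add: sum_distrib_left prod_sum_PiE)
  also have "\<dots> \<le> (\<Sum>\<gamma>\<in>multi_indices k.
      \<bar>newton_moment k h m \<gamma>\<bar> * (\<Prod>i\<in>UNIV. 2 ^ \<gamma> i / (fact (\<gamma> i) * h ^ \<gamma> i)))"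
    by (intro sum_mono mult_left_mono prod_mono conjI sum_abs_fdiff_weight_le[OF h] multi_index_le)
      (auto intro: sum_nonneg)
  finally show ?thesis .
qed

lemma abs_newton_moment_le:
  fixes m :: "('n::finite \<Rightarrow> nat) \<Rightarrow> real"
  assumes h: "h > 0" and c: "0 \<le> c" and B: "0 \<le> B"
    and growth: "\<And>\<alpha>. \<alpha> \<in> multi_indices k \<Longrightarrow> \<bar>m \<alpha>\<bar> \<le> B * c ^ mi_norm1 \<alpha>"
  shows "\<bar>newton_moment k h m \<gamma>\<bar> \<le> B * (\<Prod>i\<in>UNIV. \<Prod>l<\<gamma> i. c + real l * h)"
proof -
  let ?C = "\<lambda>\<alpha> i. c ^ \<alpha> i * \<bar>coeff (newton_poly h (\<gamma> i)) (\<alpha> i)\<bar>"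
  have "\<bar>newton_moment k h m \<gamma>\<bar>
      \<le> (\<Sum>\<alpha>\<in>multi_indices k. \<bar>m \<alpha>\<bar> * (\<Prod>i\<in>UNIV. \<bar>coeff (newton_poly h (\<gamma> i)) (\<alpha> i)\<bar>))"
    unfolding newton_moment_def by (rule order.trans[OF sum_abs]) (simp add: abs_mult abs_prod)
  also have "\<dots> \<le> (\<Sum>\<alpha>\<in>multi_indices k. B * (\<Prod>i\<in>UNIV. ?C \<alpha> i))"
  proof (intro sum_mono)
    fix \<alpha> :: "'n \<Rightarrow> nat" assume \<alpha>: "\<alpha> \<in> multi_indices k"
    have "c ^ mi_norm1 \<alpha> = (\<Prod>i\<in>UNIV. c ^ \<alpha> i)"
      unfolding mi_norm1_def by (simp add: power_sum)
    then have "\<bar>m \<alpha>\<bar> \<le> B * (\<Prod>i\<in>UNIV. c ^ \<alpha> i)"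
      using growth[OF \<alpha>] by simp
    then have "\<bar>m \<alpha>\<bar> * (\<Prod>i\<in>UNIV. \<bar>coeff (newton_poly h (\<gamma> i)) (\<alpha> i)\<bar>)
        \<le> B * (\<Prod>i\<in>UNIV. c ^ \<alpha> i) * (\<Prod>i\<in>UNIV. \<bar>coeff (newton_poly h (\<gamma> i)) (\<alpha> i)\<bar>)"
      by (intro mult_right_mono) (auto intro: prod_nonneg)
    then show "\<bar>m \<alpha>\<bar> * (\<Prod>i\<in>UNIV. \<bar>coeff (newton_poly h (\<gamma> i)) (\<alpha> i)\<bar>) \<le> B * (\<Prod>i\<in>UNIV. ?C \<alpha> i)"
      by (simp add: prod.distrib mult.assoc)
  qed
  also have "\<dots> \<le> (\<Sum>\<alpha>\<in>index_box k. B * (\<Prod>i\<in>UNIV. ?C \<alpha> i))"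
    using B c by (intro sum_mono2 finite_index_box multi_indices_subset_index_box
        mult_nonneg_nonneg prod_nonneg) auto
  also have "\<dots> = B * (\<Prod>i\<in>UNIV. \<Sum>a\<le>k. c ^ a * \<bar>coeff (newton_poly h (\<gamma> i)) a\<bar>)"
    unfolding index_box_def by (subst prod_sum_PiE) (auto simp: sum_distrib_left)
  also have "\<dots> \<le> B * (\<Prod>i\<in>UNIV. \<Prod>l<\<gamma> i. c + real l * h)"
    using B c h by (intro mult_left_mono prod_mono conjI weighted_abs_coeff_sum_newton_poly_le)
      (auto intro: sum_nonneg)
  finally show ?thesis .
qed

definition newton_weight :: "real \<Rightarrow> real \<Rightarrow> nat \<Rightarrow> real" where
  "newton_weight h c g = 2 ^ g / (fact g * h ^ g) * (\<Prod>l<g. c + real l * h)"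

lemma newton_weight_nonneg: "0 < h \<Longrightarrow> 0 \<le> c \<Longrightarrow> 0 \<le> newton_weight h c g"
  unfolding newton_weight_def by (intro mult_nonneg_nonneg prod_nonneg) auto

lemma sum_abs_grid_weight_le:
  fixes m :: "('n::finite \<Rightarrow> nat) \<Rightarrow> real"
  assumes h: "h > 0" and c: "0 \<le> c" and B: "0 \<le> B"
    and growth: "\<And>\<alpha>. \<alpha> \<in> multi_indices k \<Longrightarrow> \<bar>m \<alpha>\<bar> \<le> B * c ^ mi_norm1 \<alpha>"
  shows "(\<Sum>j\<in>index_box k. \<bar>grid_weight k h m j\<bar>)
    \<le> B * (\<Sum>(\<gamma>::'n \<Rightarrow> nat)\<in>multi_indices k. \<Prod>i\<in>UNIV. newton_weight h c (\<gamma> i))"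
proof -
  have "(\<Sum>j\<in>index_box k. \<bar>grid_weight k h m j\<bar>)
      \<le> (\<Sum>\<gamma>\<in>multi_indices k. \<bar>newton_moment k h m \<gamma>\<bar>
           * (\<Prod>i\<in>UNIV. 2 ^ \<gamma> i / (fact (\<gamma> i) * h ^ \<gamma> i)))"
    by (rule sum_abs_grid_weight_le_newton_moment[OF h])
  also have "\<dots> \<le> (\<Sum>(\<gamma>::'n \<Rightarrow> nat)\<in>multi_indices k. B * (\<Prod>i\<in>UNIV. \<Prod>l<\<gamma> i. c + real l * h)
           * (\<Prod>i\<in>UNIV. 2 ^ \<gamma> i / (fact (\<gamma> i) * h ^ \<gamma> i)))"
    using h by (intro sum_mono mult_right_mono abs_newton_moment_le[OF h c B growth] prod_nonneg) auto
  also have "\<dots> = B * (\<Sum>(\<gamma>::'n \<Rightarrow> nat)\<in>multi_indices k. \<Prod>i\<in>UNIV. newton_weight h c (\<gamma> i))"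
    unfolding newton_weight_def sum_distrib_left prod.distrib by (simp add: mult_ac)
  finally show ?thesis .
qed

lemma grid_point_in_cube:
  assumes "j \<in> index_box k" and "0 \<le> h" and "real k * h \<le> R"
  shows "grid_point h j \<in> cube R"
proof -
  have "real (j i) * h \<le> real k * h" for i
    using assms(1,2) by (intro mult_right_mono) (auto simp: mem_index_box)
  then show ?thesis
    using assms(2,3) by (auto simp: cube_def grid_point_def intro: order.trans)
qed

lemma sum_multi_indices_prod_le:
  fixes \<phi> :: "nat \<Rightarrow> real"
  assumes \<phi>: "\<And>g. 0 \<le> \<phi> g" and \<phi>0: "\<phi> 0 = 1" and z: "1 \<le> z"
  shows "(\<Sum>(\<gamma>::'n::finite \<Rightarrow> nat)\<in>multi_indices k. \<Prod>i\<in>UNIV. \<phi> (\<gamma> i))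
    \<le> 1 + z ^ k * ((\<Sum>g\<le>k. \<phi> g / z ^ g) ^ CARD('n) - 1)"
proof -
  define F where "F \<gamma> = (\<Prod>i\<in>UNIV. \<phi> (\<gamma> i))" for \<gamma> :: "'n \<Rightarrow> nat"
  define G where "G \<gamma> = (\<Prod>i\<in>UNIV. \<phi> (\<gamma> i) / z ^ \<gamma> i)" for \<gamma> :: "'n \<Rightarrow> nat"
  define zero where "zero = (\<lambda>_::'n. 0::nat)"
  have G_nonneg: "0 \<le> G \<gamma>" for \<gamma>
    unfolding G_def using \<phi> z by (intro prod_nonneg) auto
  have F_le_G: "F \<gamma> \<le> z ^ k * G \<gamma>" if "\<gamma> \<in> multi_indices k" for \<gamma>
  proof -
    have "G \<gamma> = F \<gamma> / z ^ mi_norm1 \<gamma>"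
      unfolding G_def F_def mi_norm1_def by (simp add: prod_dividef power_sum)
    then have "F \<gamma> = z ^ mi_norm1 \<gamma> * G \<gamma>"
      using z by simp
    also have "\<dots> \<le> z ^ k * G \<gamma>"
      using that z G_nonneg by (intro mult_right_mono power_increasing) (auto simp: multi_indices_def)
    finally show ?thesis .
  qed
  have "(\<Sum>\<gamma>\<in>multi_indices k. F \<gamma>) = F zero + (\<Sum>\<gamma>\<in>multi_indices k - {zero}. F \<gamma>)"
    unfolding zero_def by (rule sum.remove[OF finite_multi_indices zero_in_multi_indices])
  also have "\<dots> \<le> 1 + (\<Sum>\<gamma>\<in>multi_indices k - {zero}. z ^ k * G \<gamma>)"
    using F_le_G by (auto simp: F_def zero_def \<phi>0 intro!: sum_mono)
  also have "\<dots> \<le> 1 + (\<Sum>\<gamma>\<in>index_box k - {zero}. z ^ k * G \<gamma>)"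
    using multi_indices_subset_index_box G_nonneg z
    by (intro add_left_mono sum_mono2 finite_Diff finite_index_box) auto
  also have "\<dots> = 1 + z ^ k * ((\<Sum>\<gamma>\<in>index_box k. G \<gamma>) - G zero)"
    by (simp add: zero_def mem_index_box finite_index_box sum_diff1 sum_distrib_left right_diff_distrib)
  also have "(\<Sum>\<gamma>\<in>index_box k. G \<gamma>) = (\<Sum>g\<le>k. \<phi> g / z ^ g) ^ CARD('n)"
    unfolding index_box_def G_def by (subst prod_sum_PiE[symmetric]) auto
  finally show ?thesis
    by (simp add: F_def G_def zero_def \<phi>0)
qed

lemma newton_weight_series_le:
  assumes h: "h > 0" and c: "0 \<le> c" and z: "z > 2" and \<theta>: "- c * ln (1 - 2 / z) \<le> \<theta>"
  shows "(\<Sum>g\<le>k. newton_weight h c g / z ^ g) \<le> exp (\<theta> / h)"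
proof -
  define q where "q = 2 / z"
  have q: "0 < q" "q < 1"
    using z by (auto simp: q_def)
  define f where "f n = ((- (c / h)) gchoose n) * (- q) ^ n" for n
  have f_eq: "f n = q ^ n * pochhammer (c / h) n / fact n" for n
    unfolding f_def gbinomial_pochhammer by (simp add: power_mult_distrib[symmetric])
  have "(\<Prod>l<g. c + real l * h) = h ^ g * pochhammer (c / h) g" for g
  proof -
    have "(\<Prod>l<g. c + real l * h) = (\<Prod>l<g. h * (c / h + real l))"
      using h by (intro prod.cong) (auto simp: field_simps)
    then show ?thesis
      by (simp add: prod.distrib pochhammer_prod atLeast0LessThan)
  qed
  then have newton_weight_eq: "newton_weight h c g / z ^ g = f g" for g
    unfolding f_eq newton_weight_def q_def using h z by (simp add: field_simps power_divide)
  have sums: "f sums (1 + - q) powr (- (c / h))"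
    unfolding f_def by (rule gen_binomial_real) (use q in auto)
  have "0 \<le> f n" for n
    unfolding f_eq pochhammer_prod using c h q
    by (intro divide_nonneg_nonneg mult_nonneg_nonneg prod_nonneg) auto
  then have "(\<Sum>g\<le>k. f g) \<le> suminf f"
    using sums by (intro sum_le_suminf) (auto simp: sums_iff)
  also have "suminf f = exp ((- c * ln (1 - q)) / h)"
    using sums q by (simp add: sums_iff powr_def)
  also have "\<dots> \<le> exp (\<theta> / h)"
    using divide_right_mono[OF \<theta>, of h] h by (simp add: q_def)
  finally show ?thesis
    by (simp add: newton_weight_eq)
qed

lemma sum_multi_indices_newton_weight_le:
  assumes h: "h > 0" and c: "0 \<le> c" and z: "z > 2" and \<theta>: "- c * ln (1 - 2 / z) \<le> \<theta>"
  shows "(\<Sum>(\<gamma>::'n::finite \<Rightarrow> nat)\<in>multi_indices k. \<Prod>i\<in>UNIV. newton_weight h c (\<gamma> i))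
    \<le> 1 + z ^ k * (exp (real CARD('n) * \<theta> / h) - 1)"
proof -
  have "(\<Sum>(\<gamma>::'n \<Rightarrow> nat)\<in>multi_indices k. \<Prod>i\<in>UNIV. newton_weight h c (\<gamma> i))
      \<le> 1 + z ^ k * ((\<Sum>g\<le>k. newton_weight h c g / z ^ g) ^ CARD('n) - 1)"
    using h c z by (intro sum_multi_indices_prod_le newton_weight_nonneg) (auto simp: newton_weight_def)
  also have "\<dots> \<le> 1 + z ^ k * (exp (\<theta> / h) ^ CARD('n) - 1)"
    using z h c newton_weight_series_le[OF h c z \<theta>]
    by (intro add_left_mono mult_left_mono diff_right_mono power_mono)
      (auto intro!: sum_nonneg divide_nonneg_nonneg newton_weight_nonneg)
  also have "exp (\<theta> / h) ^ CARD('n) = exp (real CARD('n) * \<theta> / h)"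
    by (simp flip: exp_of_nat_mult)
  finally show ?thesis .
qed

text \<open>By convexity \<open>exp (\<theta> u) - 1 \<le> \<theta> / 2 * (exp (2 u) - 1)\<close>, so the left-hand side is at most
  an affine combination of \<open>L\<close> and \<open>L a \<theta> / 2\<close>, times \<open>exp (2 u)\<close>.\<close>

lemma convex_exp_bound:
  fixes L S a \<theta> u :: real
  assumes L: "0 \<le> L" and \<theta>: "0 \<le> \<theta>" "\<theta> \<le> 2" and u: "0 \<le> u" and a: "0 \<le> a"
    and S1: "L \<le> S" and S2: "L * (a * \<theta> / 2) \<le> S"
  shows "L * (1 + a * (exp (\<theta> * u) - 1)) \<le> S * exp (2 * u)"
proof -
  have "exp (\<theta> * u) \<le> (1 - \<theta> / 2) * 1 + (\<theta> / 2) * exp (2 * u)"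
    using convex_onD[OF exp_convex, of "\<theta> / 2" 0 "2 * u"] \<theta> by (simp add: algebra_simps)
  define \<mu> where "\<mu> = a * \<theta> / 2"
  have E: "1 \<le> exp (2 * u)"
    using u by simp
  have "L * (1 + a * (exp (\<theta> * u) - 1)) \<le> L * (1 + a * ((\<theta> / 2) * (exp (2 * u) - 1)))"
    using \<open>exp (\<theta> * u) \<le> _\<close> L a by (intro mult_left_mono add_left_mono) (auto simp: algebra_simps)
  also have "\<dots> = L * ((1 - \<mu>) + \<mu> * exp (2 * u))"
    by (simp add: \<mu>_def algebra_simps)
  also have "\<dots> \<le> S * exp (2 * u)"
  proof (cases "\<mu> \<le> 1")
    case True
    then have "0 \<le> (1 - \<mu>) * (exp (2 * u) - 1)"
      using E by (intro mult_nonneg_nonneg) auto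
    then have "(1 - \<mu>) + \<mu> * exp (2 * u) \<le> exp (2 * u)"
      by (simp add: algebra_simps)
    then have "L * ((1 - \<mu>) + \<mu> * exp (2 * u)) \<le> L * exp (2 * u)"
      using L by (intro mult_left_mono) auto
    then show ?thesis
      using S1 by (smt (verit) exp_gt_zero mult_right_mono)
  next
    case False
    then have "(1 - \<mu>) + \<mu> * exp (2 * u) \<le> \<mu> * exp (2 * u)"
      by simp
    then have "L * ((1 - \<mu>) + \<mu> * exp (2 * u)) \<le> (L * \<mu>) * exp (2 * u)"
      using L by (simp add: mult_left_mono mult.assoc)
    then show ?thesis
      using S2 by (smt (verit) \<mu>_def exp_gt_zero mult_right_mono)
  qed
  finally show ?thesis .
qed

section \<open>Numerical choice of the parameters\<close>

lemma falling_fact_div_fact_le: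
  "falling_fact n (2 * j) / fact j \<le> real (n choose (2 * j)) * sqrt (real n) ^ (2 * j)"
proof (cases "2 * j \<le> n")
  case True
  have "falling_fact n (2 * j) = (\<Prod>l<2*j. real n - real l)"
    unfolding falling_fact_def using True by (intro prod.cong) (auto simp: of_nat_diff)
  also have "\<dots> = real (n choose (2 * j)) * fact (2 * j)"
    by (simp add: gbinomial_prod_rev atLeast0LessThan binomial_gbinomial)
  finally have falling_fact_eq: "falling_fact n (2 * j) = real (n choose (2 * j)) * fact (2 * j)" .
  have "fact (2 * j) div fact (2 * j - j) \<le> (2 * j) ^ j"
    by (rule fact_div_fact_le_pow) simp
  moreover have "fact j dvd (fact (2 * j) :: nat)"
    by (rule fact_dvd) simp
  ultimately have "(fact (2 * j) :: nat) \<le> fact j * (2 * j) ^ j"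
    by (metis dvd_mult_div_cancel mult_le_mono2 diff_add_inverse2 mult_2)
  then have "(fact (2 * j) :: real) \<le> fact j * real (2 * j) ^ j"
    by (metis of_nat_fact of_nat_le_iff of_nat_mult of_nat_power)
  also have "\<dots> \<le> fact j * real n ^ j"
    using True by (intro mult_left_mono power_mono) auto
  finally have "fact (2 * j) / fact j \<le> real n ^ j"
    by (simp add: divide_le_eq mult.commute)
  then have "real (n choose (2 * j)) * (fact (2 * j) / fact j) \<le> real (n choose (2 * j)) * real n ^ j"
    by (intro mult_left_mono) auto
  then show ?thesis
    unfolding falling_fact_eq by (simp add: power_mult)
qed (simp add: falling_fact_eq_0)

lemma heat_growth_le: "heat_growth n \<le> (1 + sqrt (real n)) ^ n"
proof -
  have "heat_growth n \<le> (\<Sum>j\<in>{j. 2 * j \<le> n}. real (n choose (2 * j)) * sqrt (real n) ^ (2 * j))"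
    unfolding heat_growth_def
    by (subst sum.mono_neutral_right[of "{..n}" "{j. 2 * j \<le> n}"])
      (auto simp: falling_fact_eq_0 intro!: sum_mono falling_fact_div_fact_le)
  also have "\<dots> = (\<Sum>i\<in>(\<lambda>j. 2 * j) ` {j. 2 * j \<le> n}. real (n choose i) * sqrt (real n) ^ i)"
    by (subst sum.reindex) (auto simp: inj_on_def)
  also have "\<dots> \<le> (\<Sum>i\<le>n. real (n choose i) * sqrt (real n) ^ i)"
    by (intro sum_mono2) auto
  also have "\<dots> = (sqrt (real n) + 1) ^ n"
    by (subst binomial_ring) simp
  also have "\<dots> = (1 + sqrt (real n)) ^ n"
    by (simp add: add.commute)
  finally show ?thesis .
qed

lemma heat_growth_0_to_3: "heat_growth 0 = 1" "heat_growth 1 = 1" "heat_growth 2 = 3" "heat_growth 3 = 7"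
  by (simp_all add: heat_growth_def falling_fact_def numeral_eq_Suc lessThan_Suc)

lemma exp_1_ge: "27 / 10 \<le> exp (1 :: real)"
proof -
  have "(145 / 128 :: real) \<le> exp (1 / 8)"
    using exp_lower_Taylor_quadratic[of "1/8"] by (simp add: power2_eq_square)
  then have "(145 / 128 :: real) ^ 8 \<le> exp (1 / 8) ^ 8"
    by (intro power_mono) auto
  also have "exp (1 / 8 :: real) ^ 8 = exp 1"
    by (simp flip: exp_of_nat_mult)
  finally show ?thesis
    by (simp add: power_divide)
qed

lemma ln_2_le: "ln (2 :: real) \<le> 7 / 10"
proof -
  have "(3809 / 3200 :: real) \<le> exp (7 / 40)"
    using exp_lower_Taylor_quadratic[of "7/40"] by (simp add: power2_eq_square)
  then have "(3809 / 3200 :: real) ^ 4 \<le> exp (7 / 40) ^ 4"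
    by (intro power_mono) auto
  also have "exp (7 / 40 :: real) ^ 4 = exp (7 / 10)"
    by (simp flip: exp_of_nat_mult)
  finally have "2 \<le> exp (7 / 10 :: real)"
    by (simp add: power_divide)
  then have "ln 2 \<le> ln (exp (7 / 10 :: real))"
    by (subst ln_le_cancel_iff) auto
  then show ?thesis
    by simp
qed

lemma minus_ln_one_minus_divide_le:
  fixes a z :: real
  assumes "0 < a" and "a < z"
  shows "- ln (1 - a / z) \<le> a / (z - a)"
proof -
  have "- ln (1 - a / z) = ln (z / (z - a))"
    using assms by (simp add: field_simps ln_div)
  also have "\<dots> \<le> z / (z - a) - 1"
    using assms by (intro ln_le_minus_one) auto
  also have "\<dots> = a / (z - a)"
    using assms by (simp add: field_simps)
  finally show ?thesis .
qed

definition tv_constant :: "nat \<Rightarrow> real" where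
  "tv_constant k = sqrt (real k / pi) * exp (real k) * sqrt (real k) ^ k"

lemma tv_constant_ge: "exp (real k) * sqrt (real k) ^ Suc k / 2 \<le> tv_constant k"
proof -
  have "sqrt pi \<le> 2"
    using real_sqrt_le_mono[of pi 4] pi_less_4 by simp
  then have "sqrt (real k) / 2 \<le> sqrt (real k) / sqrt pi"
    by (intro divide_left_mono) auto
  then have "sqrt (real k) / 2 \<le> sqrt (real k / pi)"
    by (simp add: real_sqrt_divide)
  then have "sqrt (real k) / 2 * (exp (real k) * sqrt (real k) ^ k)
      \<le> sqrt (real k / pi) * (exp (real k) * sqrt (real k) ^ k)"
    by (intro mult_right_mono) auto
  then show ?thesis
    by (simp add: tv_constant_def mult_ac)
qed

text \<open>The condition on \<open>\<theta>\<close> bounds the binomial series \<open>(1 - 2 / z) powr (- c / h)\<close>, which dominates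
  the scaled Newton weights, by \<open>exp (\<theta> / h)\<close>; the last two conditions are those of
  \<open>convex_exp_bound\<close>.\<close>

definition admissible_parameters :: "nat \<Rightarrow> real \<Rightarrow> real \<Rightarrow> real \<Rightarrow> real \<Rightarrow> bool" where
  "admissible_parameters k L c z \<theta> \<longleftrightarrow>
     0 \<le> L \<and> 0 \<le> c \<and> 2 < z \<and> 0 \<le> \<theta> \<and> \<theta> \<le> 2 \<and> - c * ln (1 - 2 / z) \<le> \<theta> \<and>
     (\<forall>n\<le>k. heat_growth n \<le> L * c ^ n) \<and> L \<le> tv_constant k \<and> L * (z ^ k * \<theta> / 2) \<le> tv_constant k"

lemma admissible_parameters_1: "admissible_parameters 1 1 1 10 (1 / 4)"
proof -
  have "- ln (1 - 2 / 10 :: real) \<le> 1 / 4"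
    using minus_ln_one_minus_divide_le[of 2 10] by simp
  moreover have "5 / 4 \<le> tv_constant 1"
    using tv_constant_ge[of 1] exp_1_ge by simp
  moreover have "n \<le> 1 \<Longrightarrow> heat_growth n \<le> 1" for n
    using heat_growth_0_to_3 by (auto simp: le_Suc_eq)
  ultimately show ?thesis
    unfolding admissible_parameters_def by auto
qed

lemma admissible_parameters_2: "admissible_parameters 2 1 (7 / 4) 4 (49 / 40)"
proof -
  have "- (7 / 4) * ln (1 - 2 / 4 :: real) \<le> 49 / 40"
    using ln_2_le by (simp add: ln_div)
  moreover have "49 / 5 \<le> tv_constant 2"
  proof -
    have "14 / 10 \<le> sqrt (2 :: real)"
      by (rule real_le_rsqrt) (simp add: power_divide)
    moreover have "(27 / 10) ^ 2 \<le> exp (1 :: real) ^ 2"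
      using exp_1_ge by (intro power_mono) auto
    ultimately have "14 / 10 * (27 / 10) ^ 2 \<le> sqrt 2 * exp (1 :: real) ^ 2"
      by (intro mult_mono) auto
    moreover have "exp (real 2) = exp (1 :: real) ^ 2"
      by (simp flip: exp_of_nat_mult)
    moreover have "sqrt (real 2) ^ Suc 2 = 2 * sqrt (2 :: real)"
      unfolding power_Suc by simp
    ultimately show ?thesis
      using tv_constant_ge[of 2] by (simp add: power_divide mult_ac)
  qed
  moreover have "n \<le> 2 \<Longrightarrow> heat_growth n \<le> (7 / 4) ^ n" for n
    using heat_growth_0_to_3 by (auto simp: le_Suc_eq numeral_2_eq_2)
  ultimately show ?thesis
    unfolding admissible_parameters_def by auto
qed

lemma admissible_parameters_3: "admissible_parameters 3 1 2 4 2"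
proof -
  have "- ln (1 - 2 / 4 :: real) \<le> 1"
    using minus_ln_one_minus_divide_le[of 2 4] by simp
  moreover have "64 \<le> tv_constant 3"
  proof -
    have "(27 / 10) ^ 3 \<le> exp (1 :: real) ^ 3"
      using exp_1_ge by (intro power_mono) auto
    moreover have "exp (real 3) = exp (1 :: real) ^ 3"
      by (simp flip: exp_of_nat_mult)
    moreover have "sqrt (3 :: real) ^ 4 = 9"
      using power_mult[of "sqrt (3 :: real)" 2 2] by simp
    ultimately show ?thesis
      using tv_constant_ge[of 3] by (simp add: power_divide)
  qed
  moreover have "n \<le> 3 \<Longrightarrow> heat_growth n \<le> 2 ^ n" for n
    using heat_growth_0_to_3 by (auto simp: le_Suc_eq numeral_3_eq_3 numeral_2_eq_2)
  ultimately show ?thesis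
    unfolding admissible_parameters_def by auto
qed

lemma admissible_parameters_ge_4:
  assumes "4 \<le> k"
  defines "r \<equiv> sqrt (real k)"
  shows "admissible_parameters k ((r / 2) ^ k) (2 * (1 + r) / r) (2 * exp 1) 2"
proof -
  have r: "2 \<le> r"
    using real_sqrt_le_mono[of 4 "real k"] assms by (simp add: r_def)
  have e: "27 / 10 \<le> exp (1 :: real)"
    by (rule exp_1_ge)
  have rc: "r / 2 * (2 * (1 + r) / r) = 1 + r"
    using r by simp
  have "- ln (1 - 2 / (2 * exp 1)) \<le> 2 / (2 * exp 1 - (2 :: real))"
    using e by (intro minus_ln_one_minus_divide_le) auto
  also have "\<dots> \<le> 2 / 3"
    using e by (simp add: field_simps)
  finally have "2 * (1 + r) / r * (- ln (1 - 2 / (2 * exp 1))) \<le> 2 * (1 + r) / r * (2 / 3)"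
    using r by (intro mult_left_mono) auto
  also have "\<dots> \<le> 2"
    using r by (simp add: field_simps)
  finally have "- (2 * (1 + r) / r) * ln (1 - 2 / (2 * exp 1)) \<le> 2"
    by simp
  moreover have "heat_growth n \<le> (r / 2) ^ k * (2 * (1 + r) / r) ^ n" if "n \<le> k" for n
  proof -
    have "heat_growth n \<le> (1 + sqrt (real n)) ^ n"
      by (rule heat_growth_le)
    also have "\<dots> \<le> (1 + r) ^ n"
      unfolding r_def using that by (intro power_mono) auto
    also have "\<dots> = (r / 2 * (2 * (1 + r) / r)) ^ n"
      by (simp only: rc)
    also have "\<dots> = (r / 2) ^ n * (2 * (1 + r) / r) ^ n"
      by (rule power_mult_distrib)
    also have "\<dots> \<le> (r / 2) ^ k * (2 * (1 + r) / r) ^ n"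
      using r that by (intro mult_right_mono power_increasing) auto
    finally show ?thesis .
  qed
  moreover have "exp (real k) * r ^ k \<le> tv_constant k"
  proof -
    have "exp (real k) * r ^ k * 1 \<le> exp (real k) * r ^ k * (r / 2)"
      using r by (intro mult_left_mono) auto
    also have "\<dots> = exp (real k) * r ^ Suc k / 2"
      by (simp add: mult_ac)
    also have "\<dots> \<le> tv_constant k"
      using tv_constant_ge[of k] by (simp add: r_def)
    finally show ?thesis
      by simp
  qed
  moreover have "(r / 2) ^ k * ((2 * exp 1) ^ k * 2 / 2) = exp (real k) * r ^ k"
    by (simp add: power_mult_distrib power_divide flip: exp_of_nat_mult)
  moreover have "(r / 2) ^ k \<le> exp (real k) * r ^ k"
    using r by (intro order.trans[OF power_mono[of "r / 2" r]] mult_le_cancel_right1[THEN iffD2]) auto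
  ultimately show ?thesis
    unfolding admissible_parameters_def using r e by auto
qed

lemma admissible_parameters_exist:
  assumes "1 \<le> k"
  obtains L c z \<theta> where "admissible_parameters k L c z \<theta>"
proof -
  consider "k = 1" | "k = 2" | "k = 3" | "4 \<le> k"
    using assms by linarith
  then show ?thesis
    using that admissible_parameters_1 admissible_parameters_2 admissible_parameters_3
      admissible_parameters_ge_4 by cases blast+
qed

lemma tv_norm_le_admissible:
  fixes y :: "('n::finite \<Rightarrow> nat) \<Rightarrow> real" and P N :: "(real^'n) measure"
  assumes R: "R > 0" and k: "1 \<le> k" and T: "T > 0" and sol: "is_solution (cube R) k T y P N"
    and adm: "admissible_parameters k L c z \<theta>"
  shows "tv_norm P N
    \<le> sup_norm k y * max T 1 ^ (k div 2) * tv_constant k * exp (2 * real CARD('n) * real k / R)"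
proof -
  define h where "h = R / real k"
  define B where "B = sup_norm k y * max T 1 ^ (k div 2)"
  define u where "u = real CARD('n) * real k / R"
  have h: "h > 0" and B: "0 \<le> B" and u: "0 \<le> u"
    using R k sup_norm_nonneg[of k y] by (simp_all add: h_def B_def u_def)
  have L: "0 \<le> L" and c: "0 \<le> c" and z: "2 < z" and \<theta>: "0 \<le> \<theta>" "\<theta> \<le> 2" "- c * ln (1 - 2 / z) \<le> \<theta>"
    and heat: "\<And>n. n \<le> k \<Longrightarrow> heat_growth n \<le> L * c ^ n"
    and S: "L \<le> tv_constant k" "L * (z ^ k * \<theta> / 2) \<le> tv_constant k"
    using adm unfolding admissible_parameters_def by auto
  have growth: "\<bar>expTA k T y \<alpha>\<bar> \<le> B * L * c ^ mi_norm1 \<alpha>" if "\<alpha> \<in> multi_indices k" for \<alpha>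
  proof -
    have "\<bar>expTA k T y \<alpha>\<bar> \<le> B * heat_growth (mi_norm1 \<alpha>)"
      using abs_expTA_le[OF that T] by (simp add: B_def)
    also have "\<dots> \<le> B * (L * c ^ mi_norm1 \<alpha>)"
      using that heat B by (intro mult_left_mono) (auto simp: multi_indices_def)
    finally show ?thesis
      by (simp only: mult.assoc)
  qed
  have "tv_norm P N \<le> (\<Sum>j\<in>index_box k. \<bar>grid_weight k h (expTA k T y) j\<bar>)"
  proof (rule is_solution_tv_norm_le[OF sol])
    show "cube R \<in> sets borel"
      using closed_cube by (rule borel_closed)
    show "grid_point h ` index_box k \<subseteq> cube R"
      using R k h by (auto intro!: grid_point_in_cube simp: h_def)
  qed (simp_all add: finite_index_box grid_weight_moments[OF h])
  also have "\<dots> \<le> B * L * (\<Sum>(\<gamma>::'n \<Rightarrow> nat)\<in>multi_indices k. \<Prod>i\<in>UNIV. newton_weight h c (\<gamma> i))"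
    using B L by (intro sum_abs_grid_weight_le[OF h c _ growth]) auto
  also have "\<dots> \<le> B * L * (1 + z ^ k * (exp (real CARD('n) * \<theta> / h) - 1))"
    using B L by (intro mult_left_mono sum_multi_indices_newton_weight_le[OF h c z \<theta>(3)]) auto
  also have "real CARD('n) * \<theta> / h = \<theta> * u"
    using R k by (simp add: h_def u_def field_simps)
  also have "B * L * (1 + z ^ k * (exp (\<theta> * u) - 1)) \<le> B * (tv_constant k * exp (2 * u))"
    unfolding mult.assoc using B z by (intro mult_left_mono convex_exp_bound[OF L \<theta>(1,2) u _ S]) auto
  also have "2 * u = 2 * real CARD('n) * real k / R"
    by (simp add: u_def)
  finally show ?thesis
    unfolding B_def by (simp only: mult.assoc)
qed

lemma max_power_one:
  fixes T :: real
  assumes "0 \<le> T"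
  shows "max (T ^ n) 1 = max T 1 ^ n"
proof (cases "T \<le> 1")
  case True
  then show ?thesis
    using power_le_one[OF assms True, of n] by (simp add: max_def)
next
  case False
  then have "1 \<le> T ^ n"
    by (intro one_le_power) auto
  then have "max (T ^ n) 1 = T ^ n"
    by (rule max_absorb1)
  moreover have "max T 1 = T"
    using False by simp
  ultimately show ?thesis
    by simp
qed

lemma exp_times_one_plus_ln_sqrt:
  assumes "0 < k"
  shows "exp (real k * (1 + a + ln (sqrt (real k)))) = exp (real k) * sqrt (real k) ^ k * exp (real k * a)"
proof -
  have "real k * (1 + a + ln (sqrt (real k))) = real k + real k * ln (sqrt (real k)) + real k * a"
    by (simp add: algebra_simps)
  moreover have "exp (real k * ln (sqrt (real k))) = sqrt (real k) ^ k"
    using assms by (simp add: exp_of_nat_mult)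
  ultimately show ?thesis
    by (simp add: exp_add)
qed

theorem mainTheorem5:
  fixes R T :: real and k :: nat and y :: "('n::finite \<Rightarrow> nat) \<Rightarrow> real"
    and P N :: "(real^'n) measure"
  assumes "R > 0" and "k \<ge> 1" and "T > 0"
    and "is_solution (cube R) k T y P N"
  shows "tv_norm P N \<le> sup_norm k y * sqrt (real k / pi)
           * exp (real k * (1 + 2 * real CARD('n) / R + ln (sqrt (real k))))
           * max (T ^ (k div 2)) 1"
proof -
  obtain L c z \<theta> where "admissible_parameters k L c z \<theta>"
    using admissible_parameters_exist[OF assms(2)] .
  then have "tv_norm P N
      \<le> sup_norm k y * max T 1 ^ (k div 2) * tv_constant k * exp (2 * real CARD('n) * real k / R)"
    by (rule tv_norm_le_admissible[OF assms])
  moreover have "exp (real k * (1 + 2 * real CARD('n) / R + ln (sqrt (real k))))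
      = exp (real k) * sqrt (real k) ^ k * exp (2 * real CARD('n) * real k / R)"
    using exp_times_one_plus_ln_sqrt[of k "2 * real CARD('n) / R"] assms(2) by (simp add: mult_ac)
  ultimately show ?thesis
    using assms(3) by (simp add: tv_constant_def max_power_one mult_ac)
qed

end
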